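(* Fix $n\ge1$. The collection of all left Beth–Wocjan maximally entangled bases $\mathrm{LBW}(L,H)$, where $L$ ranges over Latin squares of order $n$ and $H$ over Hadamard matrices of order $n$, coincides with the collection of all quantum Latin square maximally entangled bases $B(Q,(H,H,\dots,H))$, where $Q$ ranges over Latin squares of order $n$ and $H$ over Hadamard matrices of order $n$ (the same Hadamard used for every index).
   Context: $\{\ket k\}_{k=0}^{n-1}$ is the computational basis of $\mathbb C^n$ and $\ket{k,p}=\ket k\otimes\ket p$. A quantum Latin square (QLS) of order $n$ is an $n\times n$ array of vectors of $\mathbb C^n$ in which every row and column is an orthonormal basis; the entry in column $i$, row $j$ is $\ket{Q_{ij}}$. A Latin square is a QLS whose entries are all computational basis states. A Hadamard matrix of order $n$ is an $n\times n$ complex matrix $H$ with $|H_{ij}|=1$ and $HH^\dagger=H^\dagger H=nI_n$. Given a QLS $Q$ and Hadamards $(H_j)_{j=0}^{n-1}$, $B(Q,(H_j))$ is the indexed family $A_{ij}=\frac1{\sqrt n}\sum_{k}\ket k\otimes\ket{Q_{kj}}\bra kH_j\ket i$, $i,j\in\{0,\dots,n-1\}$. Given a Latin square $L$ and a Hadamard $H$, $\mathrm{LBW}(L,H)$ is the indexed family $B_{ij}=\frac1{\sqrt n}\sum_{k,p=0}^{n-1}\ket{k,p}\,H_{ik}\,\langle L_{kp}|j\rangle$, $i,j\in\{0,\dots,n-1\}$. *)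

theory Defs
  imports Complex_Main
begin

text \<open>Vectors of C^n are represented as functions nat \<Rightarrow> complex vanishing at indices \<ge> n;
  vectors of C^n \<otimes> C^n as functions nat \<times> nat \<Rightarrow> complex, the value at (k,p) being the
  coefficient of |k,p>.  Matrices are functions nat \<Rightarrow> nat \<Rightarrow> complex (only entries
  with indices < n matter).\<close>

definition ket :: "nat \<Rightarrow> nat \<Rightarrow> complex" where
  "ket m = (\<lambda>p. if p = m then 1 else 0)"

definition in_Cn :: "nat \<Rightarrow> (nat \<Rightarrow> complex) \<Rightarrow> bool" where
  "in_Cn n v \<longleftrightarrow> (\<forall>p\<ge>n. v p = 0)"

definition cinner :: "nat \<Rightarrow> (nat \<Rightarrow> complex) \<Rightarrow> (nat \<Rightarrow> complex) \<Rightarrow> complex" where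
  "cinner n u v = (\<Sum>p<n. cnj (u p) * v p)"

text \<open>Q i j is the entry in column i, row j.  Every row and every column is an
  orthonormal basis of C^n (n orthonormal vectors of C^n).\<close>
definition QLS :: "nat \<Rightarrow> (nat \<Rightarrow> nat \<Rightarrow> nat \<Rightarrow> complex) \<Rightarrow> bool" where
  "QLS n Q \<longleftrightarrow>
     (\<forall>i<n. \<forall>j<n. in_Cn n (Q i j)) \<and>
     (\<forall>j<n. \<forall>i<n. \<forall>i'<n. cinner n (Q i j) (Q i' j) = (if i = i' then 1 else 0)) \<and>
     (\<forall>i<n. \<forall>j<n. \<forall>j'<n. cinner n (Q i j) (Q i j') = (if j = j' then 1 else 0))"

definition latin_square :: "nat \<Rightarrow> (nat \<Rightarrow> nat \<Rightarrow> nat \<Rightarrow> complex) \<Rightarrow> bool" where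
  "latin_square n L \<longleftrightarrow> QLS n L \<and> (\<forall>i<n. \<forall>j<n. \<exists>m<n. L i j = ket m)"

definition hadamard :: "nat \<Rightarrow> (nat \<Rightarrow> nat \<Rightarrow> complex) \<Rightarrow> bool" where
  "hadamard n H \<longleftrightarrow>
     (\<forall>i<n. \<forall>j<n. cmod (H i j) = 1) \<and>
     (\<forall>i<n. \<forall>j<n. (\<Sum>k<n. H i k * cnj (H j k)) = (if i = j then of_nat n else 0)) \<and>
     (\<forall>i<n. \<forall>j<n. (\<Sum>k<n. cnj (H k i) * H k j) = (if i = j then of_nat n else 0))"

text \<open>Indexed families (i,j < n) of vectors of C^n \<otimes> C^n; outside the index range the
  family is set to 0 so that families can be compared as functions.\<close>
type_synonym family = "nat \<Rightarrow> nat \<Rightarrow> (nat \<times> nat \<Rightarrow> complex)"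

text \<open>B(Q,(H_j)): A_ij = 1/sqrt n \<Sum>_k |k> \<otimes> |Q_kj> <k|H_j|i>.\<close>
definition QLS_basis :: "nat \<Rightarrow> (nat \<Rightarrow> nat \<Rightarrow> nat \<Rightarrow> complex) \<Rightarrow> (nat \<Rightarrow> nat \<Rightarrow> nat \<Rightarrow> complex) \<Rightarrow> family" where
  "QLS_basis n Q Hs = (\<lambda>i j (k, p).
     if i < n \<and> j < n \<and> k < n \<and> p < n
     then Hs j k i * Q k j p / complex_of_real (sqrt (real n)) else 0)"

text \<open>LBW(L,H): B_ij = 1/sqrt n \<Sum>_{k,p} |k,p> H_ik <L_kp|j>.\<close>
definition LBW :: "nat \<Rightarrow> (nat \<Rightarrow> nat \<Rightarrow> nat \<Rightarrow> complex) \<Rightarrow> (nat \<Rightarrow> nat \<Rightarrow> complex) \<Rightarrow> family" where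
  "LBW n L H = (\<lambda>i j (k, p).
     if i < n \<and> j < n \<and> k < n \<and> p < n
     then H i k * cnj (L k p j) / complex_of_real (sqrt (real n)) else 0)"

end

theory Submission
  imports Defs
begin

text \<open>Within a row k of a Latin square L the column index b and the symbol a determine each
  other, so the row can be inverted: the square L' with L'_{ka} = |b> iff L_{kb} = |a> is again
  Latin, and its entries satisfy <p|L'_{kj}> = <j|L_{kp}> (all amplitudes are 0 or 1, hence real).
  Comparing coefficients, LBW(L,H) = B(L',(H^T,...,H^T)) and B(Q,(H,...,H)) = LBW(Q',H^T),
  and H^T is again a Hadamard matrix.\<close>

lemma ket_eq_iff [simp]: "ket a = ket b \<longleftrightarrow> a = b"
  by (metis ket_def one_neq_zero)

lemma cnj_ket [simp]: "cnj (ket m p) = ket m p"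
  by (simp add: ket_def)

lemma in_Cn_ket: "m < n \<Longrightarrow> in_Cn n (ket m)"
  by (simp add: in_Cn_def ket_def)

lemma cinner_ket:
  assumes "a < n" "b < n"
  shows "cinner n (ket a) (ket b) = (if a = b then 1 else 0)"
proof -
  have "(\<Sum>p<n. cnj (ket a p) * ket b p) = (\<Sum>p<n. if p = a then (if a = b then 1 else 0) else 0)"
    by (intro sum.cong) (auto simp: ket_def)
  with assms show ?thesis
    by (simp add: cinner_def)
qed

lemma latin_square_iff:
  "latin_square n L \<longleftrightarrow>
     (\<forall>i<n. \<forall>j<n. \<exists>m<n. L i j = ket m) \<and>
     (\<forall>j<n. inj_on (\<lambda>i. L i j) {..<n}) \<and>
     (\<forall>i<n. inj_on (L i) {..<n})"
proof (cases "\<forall>i<n. \<forall>j<n. \<exists>m<n. L i j = ket m")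
  case True
  have cinner_entries: "cinner n (L i j) (L i' j') = (if L i j = L i' j' then 1 else 0)"
    if "i < n" "j < n" "i' < n" "j' < n" for i j i' j'
    using True that cinner_ket by (metis ket_eq_iff)
  have "\<forall>i<n. \<forall>j<n. in_Cn n (L i j)"
    using True in_Cn_ket by metis
  moreover have "(\<forall>j<n. \<forall>i<n. \<forall>i'<n. cinner n (L i j) (L i' j) = (if i = i' then 1 else 0))
      \<longleftrightarrow> (\<forall>j<n. inj_on (\<lambda>i. L i j) {..<n})"
    by (simp add: cinner_entries inj_on_def) blast
  moreover have "(\<forall>i<n. \<forall>j<n. \<forall>j'<n. cinner n (L i j) (L i j') = (if j = j' then 1 else 0))
      \<longleftrightarrow> (\<forall>i<n. inj_on (L i) {..<n})"
    by (simp add: cinner_entries inj_on_def) blast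
  ultimately show ?thesis
    using True unfolding latin_square_def QLS_def by blast
qed (auto simp: latin_square_def; blast)

lemma latin_square_row_bij:
  assumes "latin_square n L" "k < n"
  shows "bij_betw (L k) {..<n} (ket ` {..<n})"
proof -
  have inj: "inj_on (L k) {..<n}"
    using assms by (simp add: latin_square_iff)
  have sub: "L k ` {..<n} \<subseteq> ket ` {..<n}"
    using assms unfolding latin_square_iff by blast
  have "card (ket ` {..<n}) \<le> card (L k ` {..<n})"
    using card_image_le[of "{..<n}" ket] card_image[OF inj] by simp
  with sub have "L k ` {..<n} = ket ` {..<n}"
    by (intro card_seteq) auto
  with inj show ?thesis
    by (simp add: bij_betw_def)
qed

lemma latin_square_row_ex1:
  assumes "latin_square n L" "k < n" "a < n"
  shows "\<exists>!b. b < n \<and> L k b = ket a"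
  using bij_betw_imp_surj_on[OF latin_square_row_bij[OF assms(1,2)]]
    bij_betw_imp_inj_on[OF latin_square_row_bij[OF assms(1,2)]] assms(3)
  by (auto simp: inj_on_def) (metis imageE imageI lessThan_iff)

definition row_inverse :: "nat \<Rightarrow> (nat \<Rightarrow> nat \<Rightarrow> nat \<Rightarrow> complex) \<Rightarrow> nat \<Rightarrow> nat \<Rightarrow> nat \<Rightarrow> complex" where
  "row_inverse n L k a = ket (THE b. b < n \<and> L k b = ket a)"

lemma cnj_row_inverse [simp]: "cnj (row_inverse n L k a p) = row_inverse n L k a p"
  by (simp add: row_inverse_def)

lemma row_inverse_eq_ket_iff:
  assumes "latin_square n L" "k < n" "a < n" "b < n"
  shows "row_inverse n L k a = ket b \<longleftrightarrow> L k b = ket a"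
  using theI'[OF latin_square_row_ex1[OF assms(1-3)]] latin_square_row_ex1[OF assms(1-3)] assms(4)
  unfolding row_inverse_def by auto

lemma row_inverse_ex:
  assumes "latin_square n L" "k < n" "a < n"
  shows "\<exists>b<n. row_inverse n L k a = ket b"
  using theI'[OF latin_square_row_ex1[OF assms]] unfolding row_inverse_def by blast

lemma latin_square_row_inverse:
  assumes L: "latin_square n L"
  shows "latin_square n (row_inverse n L)"
  unfolding latin_square_iff
proof (intro conjI allI impI)
  show "\<exists>m<n. row_inverse n L i a = ket m" if "i < n" "a < n" for i a
    using row_inverse_ex[OF L that] .
  show "inj_on (\<lambda>i. row_inverse n L i a) {..<n}" if a: "a < n" for a
  proof (rule inj_onI)
    fix i i' assume i: "i \<in> {..<n}" "i' \<in> {..<n}"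
      and eq: "row_inverse n L i a = row_inverse n L i' a"
    obtain b where b: "b < n" "row_inverse n L i a = ket b"
      using row_inverse_ex[OF L _ a] i by blast
    have "L i b = ket a" "L i' b = ket a"
      using row_inverse_eq_ket_iff[OF L _ a b(1)] b eq i by auto
    then show "i = i'"
      using L b(1) i by (auto simp: latin_square_iff inj_on_def)
  qed
  show "inj_on (row_inverse n L i) {..<n}" if i: "i < n" for i
  proof (rule inj_onI)
    fix a a' assume a: "a \<in> {..<n}" "a' \<in> {..<n}"
      and eq: "row_inverse n L i a = row_inverse n L i a'"
    obtain b where b: "b < n" "row_inverse n L i a = ket b"
      using row_inverse_ex[OF L i] a by blast
    have "L i b = ket a" "L i b = ket a'"
      using row_inverse_eq_ket_iff[OF L i _ b(1)] b eq a by auto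
    then show "a = a'"
      by simp
  qed
qed

lemma row_inverse_apply:
  assumes L: "latin_square n L" and "k < n" "j < n" "p < n"
  shows "row_inverse n L k j p = L k p j"
proof -
  obtain b where b: "b < n" "row_inverse n L k j = ket b"
    using row_inverse_ex[OF L] assms by blast
  obtain m where m: "m < n" "L k p = ket m"
    using L assms(2,4) unfolding latin_square_iff by blast
  have "p = b \<longleftrightarrow> m = j"
    using row_inverse_eq_ket_iff[OF L assms(2-4)] b m by auto
  then show ?thesis
    using b m by (auto simp: ket_def)
qed

lemma hadamard_transpose: "hadamard n H \<Longrightarrow> hadamard n (\<lambda>a b. H b a)"
  unfolding hadamard_def by (auto simp: mult.commute)

lemma LBW_eq_QLS_basis:
  assumes "latin_square n L"
  shows "LBW n L H = QLS_basis n (row_inverse n L) (\<lambda>_ a b. H b a)"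
proof (intro ext, clarify)
  fix i j k p
  have "cnj (L k p j) = row_inverse n L k j p" if "k < n" "j < n" "p < n"
    using row_inverse_apply[OF assms that] cnj_row_inverse by metis
  then show "LBW n L H i j (k, p) = QLS_basis n (row_inverse n L) (\<lambda>_ a b. H b a) i j (k, p)"
    by (simp add: LBW_def QLS_basis_def)
qed

lemma QLS_basis_eq_LBW:
  assumes "latin_square n Q"
  shows "QLS_basis n Q (\<lambda>_. H) = LBW n (row_inverse n Q) (\<lambda>a b. H b a)"
proof (intro ext, clarify)
  fix i j k p
  have "Q k j p = cnj (row_inverse n Q k p j)" if "k < n" "j < n" "p < n"
    using row_inverse_apply[OF assms that(1,3,2)] cnj_row_inverse by metis
  then show "QLS_basis n Q (\<lambda>_. H) i j (k, p) = LBW n (row_inverse n Q) (\<lambda>a b. H b a) i j (k, p)"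
    by (simp add: LBW_def QLS_basis_def)
qed

theorem lemma24:
  fixes n :: nat
  assumes "n \<ge> 1"
  shows "{LBW n L H | L H. latin_square n L \<and> hadamard n H}
       = {QLS_basis n Q (\<lambda>_. H) | Q H. latin_square n Q \<and> hadamard n H}"
  using LBW_eq_QLS_basis QLS_basis_eq_LBW latin_square_row_inverse hadamard_transpose
  by blast

end
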